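(* Let $v=(x,y,z)\in S$ be a point with at least one irrational coordinate, and consider the subsequence of its itinerary consisting of the symbols not of type $\mathbb{A}$ (this subsequence may be empty, finite, or infinite). (i) The subsequence contains no symbol of type $\mathbb{C}$ before its first $\mathbb{B}$-type... more precisely: the non-$\mathbb{A}$ symbols of the itinerary alternate in type $\mathbb{B},\mathbb{C},\mathbb{B},\mathbb{C},\dots$ starting with type $\mathbb{B}$ (or there are none) if and only if $z=0$. (ii) The non-$\mathbb{A}$ symbols of the itinerary alternate in type $\mathbb{C},\mathbb{B},\mathbb{C},\mathbb{B},\dots$ starting with type $\mathbb{C}$ (or there are none) if and only if $y=z$.
   Context: Let $S = \{(x,y,z)\in\mathbb{R}^3 : 0\le z\le y\le x\le 1\}$; its faces $\{z=0\}$ and $\{y=z\}$ are called $\mathsf{AB}$ and $\mathsf{AC}$. For integers $n\ge1$ define $\mathbb{A}_n = \{\frac1{n+1} < x \le \frac1n,\ 0\le z\le y\le 1-nx\}$, $\mathbb{B}_n = \{0\le z\le 1-nx < y \le x\}$, $\mathbb{C}_n = \{1-nx < z \le y \le x \le \frac1n\}$; together with $\{(0,0,0)\}$ they partition $S$. The 3-dimensional Gauss map $G:S\to S$ is $G(0,0,0)=(0,0,0)$, $G(x,y,z)=\left(\frac1x-n,\frac yx,\frac zx\right)$ on $\mathbb{A}_n$, $G(x,y,z)=\left(\frac{1-y}{x}-n+1,\frac{x-y+z}{x},\frac{x-y}{x}\right)$ on $\mathbb{B}_n$, $G(x,y,z)=\left(\frac{1-z}{x}-n+1,\frac{x-z}{x},\frac{y-z}{x}\right)$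 on $\mathbb{C}_n$. For a point $v$ whose forward orbit never hits the origin (which holds whenever $v$ has an irrational coordinate), its itinerary is the sequence $\mathbb{X}_{a_1},\mathbb{X}_{a_2},\dots$ ($\mathbb{X}\in\{\mathbb{A},\mathbb{B},\mathbb{C}\}$, $a_k\ge1$) with $G^{k-1}(v)\in\mathbb{X}_{a_k}$; a symbol $\mathbb{X}_{a}$ is "of type $\mathbb{X}$". *)

theory Defs
  imports Complex_Main
begin

type_synonym pt = "real \<times> real \<times> real"

definition simplexS :: "pt set" where
  "simplexS = {(x,y,z). 0 \<le> z \<and> z \<le> y \<and> y \<le> x \<and> x \<le> 1}"

definition inA :: "nat \<Rightarrow> pt \<Rightarrow> bool" where
  "inA n v = (case v of (x,y,z) \<Rightarrow>
     1 / (real n + 1) < x \<and> x \<le> 1 / real n \<and> 0 \<le> z \<and> z \<le> y \<and> y \<le> 1 - real n * x)"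

definition inB :: "nat \<Rightarrow> pt \<Rightarrow> bool" where
  "inB n v = (case v of (x,y,z) \<Rightarrow>
     0 \<le> z \<and> z \<le> 1 - real n * x \<and> 1 - real n * x < y \<and> y \<le> x)"

definition inC :: "nat \<Rightarrow> pt \<Rightarrow> bool" where
  "inC n v = (case v of (x,y,z) \<Rightarrow>
     1 - real n * x < z \<and> z \<le> y \<and> y \<le> x \<and> x \<le> 1 / real n)"

definition gauss3 :: "pt \<Rightarrow> pt" where
  "gauss3 v = (case v of (x,y,z) \<Rightarrow>
     if v = (0,0,0) then (0,0,0)
     else if (\<exists>n\<ge>1. inA n v) then
       (let n = (THE n. n \<ge> 1 \<and> inA n v) in (1/x - real n, y/x, z/x))
     else if (\<exists>n\<ge>1. inB n v) then
       (let n = (THE n. n \<ge> 1 \<and> inB n v) in ((1-y)/x - real n + 1, (x-y+z)/x, (x-y)/x))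
     else if (\<exists>n\<ge>1. inC n v) then
       (let n = (THE n. n \<ge> 1 \<and> inC n v) in ((1-z)/x - real n + 1, (x-z)/x, (y-z)/x))
     else v)"

datatype symtype = TA | TB | TC

text \<open>Type of the piece containing a point (for points other than the origin).\<close>
definition sym_type :: "pt \<Rightarrow> symtype" where
  "sym_type v = (if \<exists>n\<ge>1. inA n v then TA else if \<exists>n\<ge>1. inB n v then TB else TC)"

text \<open>Type of the (k+1)-th symbol of the itinerary of v (k counted from 0).\<close>
definition itin_type :: "pt \<Rightarrow> nat \<Rightarrow> symtype" where
  "itin_type v k = sym_type ((gauss3 ^^ k) v)"

definition nonA_alternate :: "symtype \<Rightarrow> symtype \<Rightarrow> (nat \<Rightarrow> symtype) \<Rightarrow> bool" where
  "nonA_alternate t0 t1 s = (\<forall>k. s k \<noteq> TA \<longrightarrow>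
      s k = (if even (card {j. j < k \<and> s j \<noteq> TA}) then t0 else t1))"

end

theory Submission
  imports Defs
begin

text \<open>Let d_B = z and d_C = y - z be the distances to the faces AB and AC. A symbol of type A
  divides both by x; a symbol of type B requires d_C > 0 and turns d_B / x into the new d_C, and
  symmetrically for C. So along an itinerary whose non-A symbols alternate starting with type t,
  the distance to the face of the type expected next, multiplied by x_0 \<cdots> x_(k-1), stays equal
  to d_t(v). If d_t(v) = 0 this forces the alternation. If d_t(v) > 0 it bounds all these
  products from below, so two consecutive iterates have x close to 1; in that corner the piece index
  is 1 and the expected distance is large, which yields a symbol of type C where B is expected.\<close>

lemma prod_le_pow_if_no_consecutive_near_one:
  fixes X :: "nat \<Rightarrow> real"
  assumes "\<And>k. 0 < X k" "\<And>k. X k \<le> 1" "e \<le> 1"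
    and "\<And>k. X k \<le> 1 - e \<or> X (Suc k) \<le> 1 - e"
  shows "(\<Prod>i<2*m. X i) \<le> (1 - e) ^ m"
proof (induction m)
  case 0
  then show ?case by simp
next
  case (Suc m)
  have "X (2*m) * X (Suc (2*m)) \<le> 1 - e"
  proof (cases "X (2*m) \<le> 1 - e")
    case True
    then have "X (2*m) * X (Suc (2*m)) \<le> (1 - e) * 1"
      using assms(1-3) by (intro mult_mono) (auto intro: less_imp_le)
    then show ?thesis by simp
  next
    case False
    then have "X (2*m) * X (Suc (2*m)) \<le> 1 * (1 - e)"
      using assms(1,2,4) by (intro mult_mono) (auto intro: less_imp_le)
    then show ?thesis by simp
  qed
  then have "(\<Prod>i<2*m. X i) * (X (2*m) * X (Suc (2*m))) \<le> (1 - e) ^ m * (1 - e)"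
    using Suc.IH assms(1,3) by (intro mult_mono) (auto intro: prod_nonneg less_imp_le)
  moreover have "(\<Prod>i<2 * Suc m. X i) = (\<Prod>i<2*m. X i) * (X (2*m) * X (Suc (2*m)))"
    by (simp add: mult.assoc)
  ultimately show ?case by (simp only: power_Suc2)
qed

lemma consecutive_near_one_if_prod_bounded_below:
  fixes X :: "nat \<Rightarrow> real"
  assumes "\<And>k. 0 < X k" "\<And>k. X k \<le> 1" "0 < c" "\<And>k. c \<le> (\<Prod>i<k. X i)" "0 < e"
  shows "\<exists>k. 1 - e < X k \<and> 1 - e < X (Suc k)"
proof (rule ccontr)
  assume no: "\<not> ?thesis"
  have "e < 1"
  proof (rule ccontr)
    assume "\<not> e < 1"
    then have "1 - e < X 0 \<and> 1 - e < X (Suc 0)" using assms(1)[of 0] assms(1)[of "Suc 0"] by linarith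
    then show False using no by blast
  qed
  obtain m where m: "(1 - e) ^ m < c" using real_arch_pow_inv[OF assms(3), of "1 - e"] assms(5) \<open>e < 1\<close> by auto
  have "(\<Prod>i<2*m. X i) \<le> (1 - e) ^ m"
    using no \<open>e < 1\<close> by (intro prod_le_pow_if_no_consecutive_near_one assms(1,2)) (auto simp: not_less)
  then show False using assms(4)[of "2*m"] m by linarith
qed

lemma piece_bounds:
  assumes "n \<ge> 1" "inA n (x,y,z) \<or> inB n (x,y,z) \<or> inC n (x,y,z)"
  shows "0 < x \<and> real n * x \<le> 1 \<and> 1 < (real n + 1) * x"
  using assms unfolding inA_def inB_def inC_def by (auto simp: field_simps)

lemma piece_index:
  assumes "n \<ge> 1" "inA n (x,y,z) \<or> inB n (x,y,z) \<or> inC n (x,y,z)"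
  shows "n = nat \<lfloor>1/x\<rfloor>"
proof -
  from piece_bounds[OF assms] have "\<lfloor>1/x\<rfloor> = int n" by (auto simp: floor_eq_iff field_simps)
  then show ?thesis by simp
qed

lemma piece_index_unique:
  assumes "n \<ge> 1" "inA n (x,y,z) \<or> inB n (x,y,z) \<or> inC n (x,y,z)"
    and "m \<ge> 1" "inA m (x,y,z) \<or> inB m (x,y,z) \<or> inC m (x,y,z)"
  shows "m = n"
  using piece_index[OF assms(1,2)] piece_index[OF assms(3,4)] by simp

lemma pieces_disjoint:
  assumes "n \<ge> 1" "m \<ge> 1"
  shows "inA n (x,y,z) \<Longrightarrow> \<not> inB m (x,y,z)" "inA n (x,y,z) \<Longrightarrow> \<not> inC m (x,y,z)"
    "inB n (x,y,z) \<Longrightarrow> \<not> inC m (x,y,z)"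
proof -
  have "n = m" if "inA n (x,y,z) \<or> inB n (x,y,z)" "inB m (x,y,z) \<or> inC m (x,y,z)"
    using that piece_index_unique[OF assms(2) _ assms(1)] by blast
  then show "inA n (x,y,z) \<Longrightarrow> \<not> inB m (x,y,z)" "inA n (x,y,z) \<Longrightarrow> \<not> inC m (x,y,z)"
    "inB n (x,y,z) \<Longrightarrow> \<not> inC m (x,y,z)"
    by (auto simp: inA_def inB_def inC_def)
qed

lemma piece_cover:
  assumes "(x,y,z) \<in> simplexS" "0 < x"
  obtains n where "n \<ge> 1" "inA n (x,y,z) \<or> inB n (x,y,z) \<or> inC n (x,y,z)"
proof -
  define n where "n = nat \<lfloor>1/x\<rfloor>"
  have "1 \<le> 1/x" using assms by (simp add: simplexS_def)
  then have "n \<ge> 1" "real n \<le> 1/x" "1/x < real n + 1"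
    unfolding n_def by linarith+
  then have "n \<ge> 1" "x \<le> 1 / real n" "1 / (real n + 1) < x" "real n * x \<le> 1"
    using assms(2) by (auto simp: field_simps)
  then show ?thesis
    using that[of n] assms(1) unfolding simplexS_def inA_def inB_def inC_def by fastforce
qed

lemma gauss3_inA:
  assumes "n \<ge> 1" "inA n (x,y,z)"
  shows "gauss3 (x,y,z) = (1/x - real n, y/x, z/x)" "sym_type (x,y,z) = TA"
proof -
  have "(THE m. m \<ge> 1 \<and> inA m (x,y,z)) = n"
    using assms piece_index_unique[OF assms(1)] by blast
  then show "gauss3 (x,y,z) = (1/x - real n, y/x, z/x)" "sym_type (x,y,z) = TA"
    using assms piece_bounds[OF assms(1)] by (auto simp: gauss3_def sym_type_def)
qed

lemma gauss3_inB:
  assumes "n \<ge> 1" "inB n (x,y,z)"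
  shows "gauss3 (x,y,z) = ((1-y)/x - real n + 1, (x-y+z)/x, (x-y)/x)" "sym_type (x,y,z) = TB"
proof -
  have "(THE m. m \<ge> 1 \<and> inB m (x,y,z)) = n"
    using assms piece_index_unique[OF assms(1)] by blast
  then show "gauss3 (x,y,z) = ((1-y)/x - real n + 1, (x-y+z)/x, (x-y)/x)" "sym_type (x,y,z) = TB"
    using assms piece_bounds[OF assms(1)] pieces_disjoint(1)[OF _ assms(1)]
    by (auto simp: gauss3_def sym_type_def)
qed

lemma gauss3_inC:
  assumes "n \<ge> 1" "inC n (x,y,z)"
  shows "gauss3 (x,y,z) = ((1-z)/x - real n + 1, (x-z)/x, (y-z)/x)" "sym_type (x,y,z) = TC"
proof -
  have "(THE m. m \<ge> 1 \<and> inC m (x,y,z)) = n"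
    using assms piece_index_unique[OF assms(1)] by blast
  then show "gauss3 (x,y,z) = ((1-z)/x - real n + 1, (x-z)/x, (y-z)/x)" "sym_type (x,y,z) = TC"
    using assms piece_bounds[OF assms(1)] pieces_disjoint(2,3)[OF _ assms(1)]
    by (auto simp: gauss3_def sym_type_def)
qed

lemma gauss3_cases:
  assumes "(x,y,z) \<in> simplexS" "0 < x"
  obtains (A) n where "n \<ge> 1" "inA n (x,y,z)" "sym_type (x,y,z) = TA"
      "gauss3 (x,y,z) = (1/x - real n, y/x, z/x)"
  | (B) n where "n \<ge> 1" "inB n (x,y,z)" "sym_type (x,y,z) = TB"
      "gauss3 (x,y,z) = ((1-y)/x - real n + 1, (x-y+z)/x, (x-y)/x)"
  | (C) n where "n \<ge> 1" "inC n (x,y,z)" "sym_type (x,y,z) = TC"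
      "gauss3 (x,y,z) = ((1-z)/x - real n + 1, (x-z)/x, (y-z)/x)"
proof -
  obtain n where n: "n \<ge> 1" "inA n (x,y,z) \<or> inB n (x,y,z) \<or> inC n (x,y,z)"
    using piece_cover[OF assms] .
  then consider "inA n (x,y,z)" | "inB n (x,y,z)" | "inC n (x,y,z)" by blast
  then show ?thesis
  proof cases
    case 1
    show ?thesis using that(1)[OF n(1) 1 gauss3_inA(2,1)[OF n(1) 1]] .
  next
    case 2
    show ?thesis using that(2)[OF n(1) 2 gauss3_inB(2,1)[OF n(1) 2]] .
  next
    case 3
    show ?thesis using that(3)[OF n(1) 3 gauss3_inC(2,1)[OF n(1) 3]] .
  qed
qed

lemma gauss3_in_simplexS:
  assumes "(x,y,z) \<in> simplexS" "0 < x"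
  shows "gauss3 (x,y,z) \<in> simplexS"
  using assms
proof (cases rule: gauss3_cases)
  case (B n)
  have "x * (z + real n * x) \<le> x * 1"
    using B(2) assms(2) by (intro mult_left_mono) (auto simp: inB_def)
  then show ?thesis using assms B by (auto simp: simplexS_def inB_def field_simps)
next
  case (C n)
  then show ?thesis using assms piece_bounds[OF C(1)] by (auto simp: simplexS_def inC_def field_simps)
qed (auto simp: simplexS_def inA_def field_simps)

definition irrational_pt :: "pt \<Rightarrow> bool" where
  "irrational_pt v = (case v of (x,y,z) \<Rightarrow> x \<notin> \<rat> \<or> y \<notin> \<rat> \<or> z \<notin> \<rat>)"

lemma not_irrational_pt_if_ratios_rational:
  fixes x y z :: real
  assumes "x \<noteq> 0" "1/x \<in> \<rat>" "y/x \<in> \<rat>" "z/x \<in> \<rat>"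
  shows "\<not> irrational_pt (x,y,z)"
proof -
  have "x = 1 / (1/x)" "y = y/x / (1/x)" "z = z/x / (1/x)" using assms(1) by simp_all
  then show ?thesis unfolding irrational_pt_def using assms(2-4) by (metis Rats_divide Rats_1 case_prod_conv)
qed

lemma gauss3_irrational_pt:
  assumes "(x,y,z) \<in> simplexS" "0 < x" "irrational_pt (x,y,z)"
  shows "irrational_pt (gauss3 (x,y,z))"
proof (rule ccontr)
  assume "\<not> irrational_pt (gauss3 (x,y,z))"
  then obtain a b c where G: "gauss3 (x,y,z) = (a,b,c)" "a \<in> \<rat>" "b \<in> \<rat>" "c \<in> \<rat>"
    unfolding irrational_pt_def by (auto split: prod.splits)
  have "1/x \<in> \<rat> \<and> y/x \<in> \<rat> \<and> z/x \<in> \<rat>"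
    using assms(1,2)
  proof (cases rule: gauss3_cases)
    case (A n)
    then have "1/x = a + real n" "y/x = b" "z/x = c" using G(1) by auto
    then show ?thesis using G(2-4) by simp
  next
    case (B n)
    then have "1/x = a + real n - c" "y/x = 1 - c" "z/x = b - c"
      using G(1) assms(2) by (auto simp: field_simps)
    then show ?thesis using G(2-4) by simp
  next
    case (C n)
    then have "1/x = a + real n - b" "y/x = c + 1 - b" "z/x = 1 - b"
      using G(1) assms(2) by (auto simp: field_simps)
    then show ?thesis using G(2-4) by simp
  qed
  then show False using not_irrational_pt_if_ratios_rational assms(2,3) by simp
qed

lemma irrational_pt_fst_pos:
  assumes "(x,y,z) \<in> simplexS" "irrational_pt (x,y,z)"
  shows "0 < x"
proof (rule ccontr)
  assume "\<not> 0 < x"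
  then have "x = 0" "y = 0" "z = 0" using assms(1) by (auto simp: simplexS_def)
  then show False using assms(2) by (simp add: irrational_pt_def)
qed

lemma orbit_in_simplexS:
  assumes "v \<in> simplexS" "irrational_pt v"
  shows "(gauss3 ^^ k) v \<in> simplexS \<and> irrational_pt ((gauss3 ^^ k) v)"
proof (induction k)
  case 0
  then show ?case using assms by simp
next
  case (Suc k)
  obtain x y z where xyz: "(gauss3 ^^ k) v = (x,y,z)" by (metis prod_cases3)
  then have "(x,y,z) \<in> simplexS" "irrational_pt (x,y,z)" using Suc by simp_all
  moreover have "0 < x" using irrational_pt_fst_pos calculation .
  ultimately show ?case
    using xyz gauss3_in_simplexS gauss3_irrational_pt by simp
qed

lemma orbit_point:
  assumes "v \<in> simplexS" "irrational_pt v"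
  obtains x y z where "(gauss3 ^^ k) v = (x,y,z)" "(x,y,z) \<in> simplexS" "0 < x"
  by (metis orbit_in_simplexS[OF assms] irrational_pt_fst_pos prod_cases3)

fun swap_BC :: "symtype \<Rightarrow> symtype" where
  "swap_BC TA = TA"
| "swap_BC TB = TC"
| "swap_BC TC = TB"

text \<open>z and y - z vanish exactly on the faces AB and AC respectively; the value at TA is junk.\<close>

definition face_dist :: "symtype \<Rightarrow> pt \<Rightarrow> real" where
  "face_dist t v = (case v of (x,y,z) \<Rightarrow> if t = TB then z else y - z)"

lemma face_dist_bounds:
  assumes "v \<in> simplexS"
  shows "0 \<le> face_dist t v \<and> face_dist t v \<le> 1"
  using assms by (auto simp: simplexS_def face_dist_def)

lemma face_dist_gauss3_TA:
  assumes "(x,y,z) \<in> simplexS" "0 < x" "sym_type (x,y,z) = TA"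
  shows "face_dist t (gauss3 (x,y,z)) = face_dist t (x,y,z) / x"
  using assms by (cases rule: gauss3_cases) (auto simp: face_dist_def diff_divide_distrib)

lemma face_dist_gauss3_nonA:
  assumes "(x,y,z) \<in> simplexS" "0 < x" "sym_type (x,y,z) = u" "u \<noteq> TA"
  shows "face_dist (swap_BC u) (gauss3 (x,y,z)) = face_dist u (x,y,z) / x"
    and "0 < face_dist (swap_BC u) (x,y,z)"
  using assms(1,2)
  by (cases rule: gauss3_cases;
      use assms(3,4) in \<open>auto simp: face_dist_def inB_def inC_def field_simps\<close>)+

definition next_nonA_type :: "symtype \<Rightarrow> (nat \<Rightarrow> symtype) \<Rightarrow> nat \<Rightarrow> symtype" where
  "next_nonA_type t s k = (if even (card {j. j < k \<and> s j \<noteq> TA}) then t else swap_BC t)"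

lemma nonA_alternate_iff_next_nonA_type:
  "nonA_alternate t (swap_BC t) s \<longleftrightarrow> (\<forall>k. s k \<noteq> TA \<longrightarrow> s k = next_nonA_type t s k)"
  by (simp add: nonA_alternate_def next_nonA_type_def)

lemma next_nonA_type_0 [simp]: "next_nonA_type t s 0 = t"
  by (simp add: next_nonA_type_def)

lemma next_nonA_type_Suc:
  "next_nonA_type t s (Suc k) =
     (if s k = TA then next_nonA_type t s k else swap_BC (next_nonA_type t s k))"
proof -
  have "{j. j < Suc k \<and> s j \<noteq> TA} =
      (if s k = TA then {j. j < k \<and> s j \<noteq> TA} else insert k {j. j < k \<and> s j \<noteq> TA})"
    by (auto simp: less_Suc_eq)
  then show ?thesis
    by (cases t) (auto simp: next_nonA_type_def)
qed

lemma next_nonA_type_neq_TA: "t \<noteq> TA \<Longrightarrow> next_nonA_type t s k \<noteq> TA"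
  by (cases t) (auto simp: next_nonA_type_def)

lemma face_dist_orbit:
  assumes "v \<in> simplexS" "irrational_pt v"
    and "\<And>j. j < k \<Longrightarrow> itin_type v j \<noteq> TA \<Longrightarrow> itin_type v j = next_nonA_type t (itin_type v) j"
  shows "face_dist (next_nonA_type t (itin_type v) k) ((gauss3 ^^ k) v)
           * (\<Prod>i<k. fst ((gauss3 ^^ i) v)) = face_dist t v"
  using assms(3)
proof (induction k)
  case 0
  then show ?case by simp
next
  case (Suc k)
  obtain x y z where w: "(gauss3 ^^ k) v = (x,y,z)" and S: "(x,y,z) \<in> simplexS" and x: "0 < x"
    using orbit_point[OF assms(1,2)] .
  have s: "itin_type v k = sym_type (x,y,z)" by (simp add: itin_type_def w)
  let ?e = "next_nonA_type t (itin_type v)"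
  have IH: "face_dist (?e k) (x,y,z) * (\<Prod>i<k. fst ((gauss3 ^^ i) v)) = face_dist t v"
    using Suc by (simp add: w)
  have "face_dist (?e (Suc k)) (gauss3 (x,y,z)) = face_dist (?e k) (x,y,z) / x"
  proof (cases "sym_type (x,y,z) = TA")
    case True
    then show ?thesis using face_dist_gauss3_TA[OF S x] s by (simp add: next_nonA_type_Suc)
  next
    case False
    then have "sym_type (x,y,z) = ?e k" using Suc.prems[of k] s by simp
    then show ?thesis using face_dist_gauss3_nonA(1)[OF S x _ False] s False
      by (simp add: next_nonA_type_Suc)
  qed
  then show ?case using IH x w by simp
qed

lemma nonA_alternate_if_face_dist_zero:
  assumes "v \<in> simplexS" "irrational_pt v" "t \<noteq> TA" "face_dist t v = 0"
  shows "nonA_alternate t (swap_BC t) (itin_type v)"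
  unfolding nonA_alternate_iff_next_nonA_type
proof (intro allI)
  let ?s = "itin_type v" and ?e = "next_nonA_type t (itin_type v)"
  fix k
  show "?s k \<noteq> TA \<longrightarrow> ?s k = ?e k"
  proof (induction k rule: less_induct)
    case (less k)
    obtain x y z where w: "(gauss3 ^^ k) v = (x,y,z)" and S: "(x,y,z) \<in> simplexS" and x: "0 < x"
      using orbit_point[OF assms(1,2)] .
    have "face_dist (?e k) (x,y,z) * (\<Prod>i<k. fst ((gauss3 ^^ i) v)) = 0"
      using face_dist_orbit[OF assms(1,2), of k t] less assms(4) w by simp
    moreover have "(\<Prod>i<k. fst ((gauss3 ^^ i) v)) \<noteq> 0"
      by (intro prod_pos less_imp_neq[symmetric]) (metis orbit_point[OF assms(1,2)] fst_conv)
    ultimately have on_face: "face_dist (?e k) (x,y,z) = 0" by simp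
    show ?case
    proof
      assume nonA: "?s k \<noteq> TA"
      have s: "?s k = sym_type (x,y,z)" by (simp add: itin_type_def w)
      have "swap_BC (?s k) \<noteq> ?e k"
        using face_dist_gauss3_nonA(2)[OF S x s[symmetric] nonA] on_face by auto
      then show "?s k = ?e k"
        using nonA next_nonA_type_neq_TA[OF assms(3)] by (cases "?s k"; cases "?e k") auto
    qed
  qed
qed

lemma sym_type_near_vertex:
  assumes "(x,y,z) \<in> simplexS" "1/2 < x" "t \<noteq> TA" "1 - x < face_dist t (x,y,z)"
  shows "sym_type (x,y,z) \<noteq> TA \<and> (t = TB \<longrightarrow> sym_type (x,y,z) = TC)"
proof -
  have x: "0 < x" using assms(2) by simp
  have yz: "0 \<le> z" "z \<le> y" using assms(1) by (simp_all add: simplexS_def)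
  have y: "1 - x < y" and z: "t = TB \<Longrightarrow> 1 - x < z"
    using assms(4) yz by (simp_all add: face_dist_def split: if_splits)
  have index_1: "n = 1" if "n \<ge> 1" "inA n (x,y,z) \<or> inB n (x,y,z) \<or> inC n (x,y,z)" for n
  proof -
    have "real n * x < 2 * x" using piece_bounds[OF that] assms(2) by linarith
    then have "real n < 2" using x by (simp add: mult_less_cancel_right)
    then show "n = 1" using that(1) by linarith
  qed
  from assms(1) x show ?thesis
  proof (cases rule: gauss3_cases)
    case (A n)
    then have "y \<le> 1 - x" using index_1[of n] by (simp add: inA_def)
    with y show ?thesis by simp
  next
    case (B n)
    then have "z \<le> 1 - x" using index_1[of n] by (simp add: inB_def)
    with z B(3) show ?thesis by auto
  qed simp_all
qed

lemma face_dist_zero_if_nonA_alternate: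
  assumes "v \<in> simplexS" "irrational_pt v" "t \<noteq> TA"
    and alt: "nonA_alternate t (swap_BC t) (itin_type v)"
  shows "face_dist t v = 0"
proof (rule ccontr)
  let ?s = "itin_type v" and ?e = "next_nonA_type t (itin_type v)"
  define X where "X i = fst ((gauss3 ^^ i) v)" for i
  define d where "d = face_dist t v"
  assume "face_dist t v \<noteq> 0"
  then have d: "0 < d" using face_dist_bounds[OF assms(1), of t] by (simp add: d_def)
  have X_pos: "0 < X k" and X_le_1: "X k \<le> 1" for k
  proof -
    obtain x y z where "(gauss3 ^^ k) v = (x,y,z)" "(x,y,z) \<in> simplexS" "0 < x"
      using orbit_point[OF assms(1,2)] .
    then show "0 < X k" "X k \<le> 1" by (simp_all add: X_def simplexS_def)
  qed
  have e_alt: "?s k \<noteq> TA \<Longrightarrow> ?s k = ?e k" for k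
    using alt by (simp add: nonA_alternate_iff_next_nonA_type)
  have d_le: "d \<le> face_dist (?e k) ((gauss3 ^^ k) v) \<and> d \<le> (\<Prod>i<k. X i)" for k
  proof -
    let ?f = "face_dist (?e k) ((gauss3 ^^ k) v)" and ?P = "\<Prod>i<k. X i"
    have "?f * ?P = d"
      using face_dist_orbit[OF assms(1,2)] e_alt by (simp add: X_def d_def)
    moreover have "0 < ?P" "?P \<le> 1"
      using X_pos X_le_1 by (auto intro: prod_pos prod_le_1 less_imp_le)
    moreover have "0 \<le> ?f" "?f \<le> 1"
      using face_dist_bounds orbit_in_simplexS[OF assms(1,2)] by blast+
    ultimately show ?thesis
      using mult_left_le[of ?P ?f] mult_left_le_one_le[of ?P ?f] by simp
  qed
  have "\<exists>k. 1 - min d (1/2) < X k \<and> 1 - min d (1/2) < X (Suc k)"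
    by (rule consecutive_near_one_if_prod_bounded_below[OF X_pos X_le_1 d]) (use d_le d in auto)
  then obtain k where k: "1 - min d (1/2) < X k" "1 - min d (1/2) < X (Suc k)" by blast
  have near: "?s j = ?e j \<and> ?e j \<noteq> TB" if "1 - min d (1/2) < X j" for j
  proof -
    obtain x y z where w: "(gauss3 ^^ j) v = (x,y,z)" and S: "(x,y,z) \<in> simplexS"
      using orbit_point[OF assms(1,2)] .
    have "1 - min d (1/2) < x" using that w by (simp add: X_def)
    then have "1 - x < min d (1/2)" by linarith
    moreover have "d \<le> face_dist (?e j) (x,y,z)" using d_le[of j] w by simp
    ultimately have "1/2 < x" "1 - x < face_dist (?e j) (x,y,z)" by simp_all
    note near_vertex = sym_type_near_vertex[OF S this(1) next_nonA_type_neq_TA[OF assms(3)] this(2)]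
    have s: "?s j = sym_type (x,y,z)" by (simp add: itin_type_def w)
    have nonA: "?s j \<noteq> TA" and TB_to_TC: "?e j = TB \<Longrightarrow> ?s j = TC"
      using near_vertex unfolding s by blast+
    have "?s j = ?e j" using e_alt[OF nonA] .
    with TB_to_TC show ?thesis by (metis symtype.distinct)
  qed
  have "?e k = TC"
    using near[OF k(1)] next_nonA_type_neq_TA[OF assms(3)] by (cases "?e k") blast+
  moreover have "?s k = TC" using near[OF k(1)] calculation by simp
  ultimately have "?e (Suc k) = TB" by (simp add: next_nonA_type_Suc)
  then show False using near[OF k(2)] by blast
qed

theorem mainTheorem16:
  fixes x y z :: real
  assumes "(x, y, z) \<in> simplexS"
    and "x \<notin> \<rat> \<or> y \<notin> \<rat> \<or> z \<notin> \<rat>"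
  shows "(nonA_alternate TB TC (itin_type (x, y, z)) \<longleftrightarrow> z = 0)
       \<and> (nonA_alternate TC TB (itin_type (x, y, z)) \<longleftrightarrow> y = z)"
proof -
  have irr: "irrational_pt (x,y,z)" using assms(2) by (simp add: irrational_pt_def)
  have "nonA_alternate t (swap_BC t) (itin_type (x,y,z)) \<longleftrightarrow> face_dist t (x,y,z) = 0"
    if "t \<noteq> TA" for t
    using nonA_alternate_if_face_dist_zero[OF assms(1) irr that]
      face_dist_zero_if_nonA_alternate[OF assms(1) irr that] by blast
  from this[of TB] this[of TC] show ?thesis by (simp add: face_dist_def)
qed

end
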